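(* Let $\sigma \in (\mathbb{R}[\mathbf{x}]_{2d+2})^{*}$ be a positive linear functional, and let $\mathbf{k}, \mathbf{p}$ (together with $\mathbf{l}$, $\mathbf{b}$) be the output of the orthogonalization algorithm described below. For $\mathbf{x}^{\alpha}\in (\mathbf{l})_{d}$, i.e. $\mathbf{x}^{\alpha}$ divisible by a monomial in $\mathbf{l}$ and of degree $|\alpha|\le d$, the polynomial $p_{\alpha}= \mathrm{proj}(\mathbf{x}^{\alpha}, \mathbf{p}_{\preceq \alpha})$ lies in $(\mathbf{k})_{\preceq \alpha} \subset \mathrm{Ann}_{d}(\sigma)$.
   Context: Let $\sigma \in (\mathbb{R}[\mathbf{x}]_{2d+2})^{*}$ be positive, i.e. $\sigma(p^2)\ge 0$ for all polynomials $p$ of degree $\le d+1$. Define the bilinear form $\langle p, q\rangle_{\sigma} := \sigma(pq)$ on $\mathbb{R}[\mathbf{x}]_d$, and $\mathrm{Ann}_{d}(\sigma)=\{p\in \mathbb{R}[\mathbf{x}]_{d} \mid \sigma(pq)=0 \text{ for all } q\in\mathbb{R}[\mathbf{x}]_d\} = \{p \in \mathbb{R}[\mathbf{x}]_{d}\mid \sigma(p^{2})=0\}$. For a list $\mathbf{p}=[p_1,\dots,p_l]$ of polynomials with $\langle p_i,p_i\rangle_\sigma>0$ and $\langle p_i,p_j\rangle_\sigma=0$ for $i\ne j$, set $\mathrm{proj}(f,\mathbf{p}) = f - \sum_{i=1}^{l} \frac{\langle f,p_i\rangle_\sigma}{\langle p_i,p_i\rangle_\sigma} p_i$. The algorithm: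 fix a monomial ordering $\prec$ compatible with degree. Start with empty lists $\mathbf{b},\mathbf{p},\mathbf{k},\mathbf{l}$ and current monomial set $\mathbf{n}=[1]$. While $\mathbf{n}$ is nonempty, for each $\mathbf{x}^\alpha\in\mathbf{n}$ compute $p_\alpha := \mathrm{proj}(\mathbf{x}^\alpha,\mathbf{p})$ and $v_\alpha=\langle p_\alpha,p_\alpha\rangle_\sigma$; if $v_\alpha\neq 0$, add $\mathbf{x}^\alpha$ to $\mathbf{b}$ and $p_\alpha$ to $\mathbf{p}$, otherwise add $k_\alpha:=p_\alpha$ to $\mathbf{k}$ and $\mathbf{x}^\alpha$ to $\mathbf{l}$. Then let $\mathbf{n}$ be the monomials of degree $\le d$ of lowest degree, ordered by $\prec$, not in $\mathbf{b}$ and not divisible by a monomial of $\mathbf{l}$. The output is $\mathbf{k}=[k_\gamma]_{\mathbf{x}^\gamma\in\mathbf{l}}$ (with leading monomials $\mathbf{l}$), orthogonal polynomials $\mathbf{p}=[p_\beta]$, and monomials $\mathbf{b}$. Notation: for $\alpha\in\mathbb{N}^n$, $(\mathbf{k})_{\preceq\alpha}$ is the vector space spanned by the polynomials $\mathbf{x}^\delta k_\gamma$ with $\delta+\gamma\preceq\alpha$; $\mathbf{p}_{\preceq\alpha}$ is the set of $p_\beta\in\mathbf{p}$ with $\beta\preceq\alpha$. *)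

theory Defs
  imports Complex_Main "HOL-Library.Poly_Mapping"
begin

text \<open>Multivariate real polynomials in the variables of a finite type 'v:
  monomials x^alpha are exponent vectors 'v =>0 nat, polynomials are finitely
  supported maps from monomials to real coefficients (with convolution product).\<close>

type_synonym 'v mon = "'v \<Rightarrow>\<^sub>0 nat"
type_synonym 'v mpoly = "'v mon \<Rightarrow>\<^sub>0 real"

definition mdeg :: "'v mon \<Rightarrow> nat" where
  "mdeg a = (\<Sum>v\<in>Poly_Mapping.keys a. Poly_Mapping.lookup a v)"

definition monom :: "'v mon \<Rightarrow> 'v mpoly" where
  "monom a = Poly_Mapping.single a 1"

definition cpoly :: "real \<Rightarrow> 'v mpoly" where
  "cpoly c = Poly_Mapping.single 0 c"

definition mdvd :: "'v mon \<Rightarrow> 'v mon \<Rightarrow> bool" where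
  "mdvd g a \<longleftrightarrow> (\<forall>v. Poly_Mapping.lookup g v \<le> Poly_Mapping.lookup a v)"

definition deg_le :: "nat \<Rightarrow> 'v mpoly \<Rightarrow> bool" where
  "deg_le d p \<longleftrightarrow> (\<forall>a\<in>Poly_Mapping.keys p. mdeg a \<le> d)"

definition monomial_order :: "('v mon \<Rightarrow> 'v mon \<Rightarrow> bool) \<Rightarrow> bool" where
  "monomial_order le \<longleftrightarrow>
     (\<forall>a. le a a) \<and> (\<forall>a b. le a b \<and> le b a \<longrightarrow> a = b) \<and>
     (\<forall>a b c. le a b \<and> le b c \<longrightarrow> le a c) \<and> (\<forall>a b. le a b \<or> le b a) \<and>
     (\<forall>a. le 0 a) \<and> (\<forall>a b c. le a b \<longrightarrow> le (a + c) (b + c))"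

definition degree_compatible :: "('v mon \<Rightarrow> 'v mon \<Rightarrow> bool) \<Rightarrow> bool" where
  "degree_compatible le \<longleftrightarrow> (\<forall>a b. mdeg a < mdeg b \<longrightarrow> le a b \<and> a \<noteq> b)"

text \<open>A linear functional on polynomials, given by its moments s(alpha) = sigma(x^alpha).\<close>
definition sigma :: "('v mon \<Rightarrow> real) \<Rightarrow> 'v mpoly \<Rightarrow> real" where
  "sigma s f = (\<Sum>a\<in>Poly_Mapping.keys f. Poly_Mapping.lookup f a * s a)"

definition ip :: "('v mon \<Rightarrow> real) \<Rightarrow> 'v mpoly \<Rightarrow> 'v mpoly \<Rightarrow> real" where
  "ip s p q = sigma s (p * q)"

text \<open>sigma in (R[x]_{2d+2})^* is positive: sigma(p^2) >= 0 for deg p <= d+1.\<close>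
definition positive_functional :: "nat \<Rightarrow> ('v mon \<Rightarrow> real) \<Rightarrow> bool" where
  "positive_functional d s \<longleftrightarrow> (\<forall>p. deg_le (d + 1) p \<longrightarrow> sigma s (p * p) \<ge> 0)"

definition proj :: "('v mon \<Rightarrow> real) \<Rightarrow> 'v mpoly \<Rightarrow> 'v mpoly list \<Rightarrow> 'v mpoly" where
  "proj s f ps = f - sum_list (map (\<lambda>q. cpoly (ip s f q / ip s q q) * q) ps)"

definition Ann :: "('v mon \<Rightarrow> real) \<Rightarrow> nat \<Rightarrow> 'v mpoly set" where
  "Ann s d = {p. deg_le d p \<and> (\<forall>q. deg_le d q \<longrightarrow> sigma s (p * q) = 0)}"

definition lin_span :: "'v mpoly set \<Rightarrow> 'v mpoly set" where
  "lin_span S = {p. \<exists>F c. finite F \<and> F \<subseteq> S \<and> p = (\<Sum>q\<in>F. cpoly (c q) * q)}"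

text \<open>Algorithm state: (b, p, l, k) with p parallel to b and k parallel to l.\<close>
type_synonym 'v state = "'v mon list \<times> 'v mpoly list \<times> 'v mon list \<times> 'v mpoly list"

definition proc_mon :: "('v mon \<Rightarrow> real) \<Rightarrow> 'v mon \<Rightarrow> 'v state \<Rightarrow> 'v state" where
  "proc_mon s a st = (case st of (b, ps, l, ks) \<Rightarrow>
     (let pa = proj s (monom a) ps in
      if ip s pa pa \<noteq> 0 then (b @ [a], ps @ [pa], l, ks) else (b, ps, l @ [a], ks @ [pa])))"

definition candidates :: "nat \<Rightarrow> 'v mon list \<Rightarrow> 'v mon list \<Rightarrow> 'v mon set" where
  "candidates d b l = {a. mdeg a \<le> d \<and> a \<notin> set b \<and> \<not> (\<exists>g\<in>set l. mdvd g a)}"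

definition lowest :: "'v mon set \<Rightarrow> 'v mon set" where
  "lowest S = {a\<in>S. \<forall>c\<in>S. mdeg a \<le> mdeg c}"

definition sort_by :: "('v mon \<Rightarrow> 'v mon \<Rightarrow> bool) \<Rightarrow> 'v mon set \<Rightarrow> 'v mon list" where
  "sort_by le S = (THE xs. distinct xs \<and> set xs = S \<and> sorted_wrt le xs)"

definition next_n :: "('v mon \<Rightarrow> 'v mon \<Rightarrow> bool) \<Rightarrow> nat \<Rightarrow> 'v state \<Rightarrow> 'v mon list" where
  "next_n le d st = (case st of (b, ps, l, ks) \<Rightarrow> sort_by le (lowest (candidates d b l)))"

text \<open>State and current monomial list n after N rounds of the while loop
  (once n is empty, the loop has stopped and nothing changes).\<close>
fun alg_iter :: "('v mon \<Rightarrow> 'v mon \<Rightarrow> bool) \<Rightarrow> ('v mon \<Rightarrow> real) \<Rightarrow> nat \<Rightarrow> nat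
    \<Rightarrow> 'v state \<times> 'v mon list" where
  "alg_iter le s d 0 = (([], [], [], []), [0])"
| "alg_iter le s d (Suc N) =
    (case alg_iter le s d N of (st, n) \<Rightarrow>
       if n = [] then (st, n)
       else (let st' = fold (proc_mon s) n st in (st', next_n le d st')))"

definition alg_output :: "('v mon \<Rightarrow> 'v mon \<Rightarrow> bool) \<Rightarrow> ('v mon \<Rightarrow> real) \<Rightarrow> nat \<Rightarrow> 'v state \<Rightarrow> bool" where
  "alg_output le s d st \<longleftrightarrow> (\<exists>N. alg_iter le s d N = (st, []))"

definition p_upto :: "('v mon \<Rightarrow> 'v mon \<Rightarrow> bool) \<Rightarrow> 'v mon \<Rightarrow> 'v mon list \<Rightarrow> 'v mpoly list \<Rightarrow> 'v mpoly list" where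
  "p_upto le a b ps = map snd (filter (\<lambda>(be, _). le be a) (zip b ps))"

definition k_upto :: "('v mon \<Rightarrow> 'v mon \<Rightarrow> bool) \<Rightarrow> 'v mon \<Rightarrow> 'v mon list \<Rightarrow> 'v mpoly list \<Rightarrow> 'v mpoly set" where
  "k_upto le a l ks = lin_span {monom de * kg | de g kg. (g, kg) \<in> set (zip l ks) \<and> le (de + g) a}"

end

theory Submission
  imports Defs
begin

text \<open>
  Positivity of \<sigma> yields a Cauchy-Schwarz argument: if \<sigma>(p^2) = 0 and deg p \<le> d + 1, then
  \<sigma>(p q) = 0 for every q of degree \<le> d + 1. Hence each k_\<gamma> annihilates even the polynomials of
  degree d + 1, and this property survives multiplication by one variable at a time, since
  \<sigma>((x_i r)^2) = \<sigma>(r x_i^2 r); so (k)_{\<preceq>\<alpha>} \<subseteq> Ann_d(\<sigma>).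

  Throughout the algorithm, every p_\<beta> and every k_\<gamma> is its leading monomial plus a combination
  of earlier p's, and at the end every monomial of degree \<le> d lies in b or is divisible by some
  monomial of l. Well-founded induction along \<prec> then puts x^\<alpha> into the span of p_{\<preceq>\<alpha>} and
  (k)_{\<preceq>\<alpha>}. Since proj(x^\<alpha>, p_{\<preceq>\<alpha>}) is orthogonal to p_{\<preceq>\<alpha>}, and so is
  (k)_{\<preceq>\<alpha>} \<subseteq> Ann_d(\<sigma>), its component along the orthogonal family p_{\<preceq>\<alpha>} vanishes.
\<close>

section \<open>Polynomials as a real inner product space\<close>

lemma cpoly_add: "cpoly (a + b) = cpoly a + cpoly b"
  by (simp add: cpoly_def single_add)

lemma cpoly_mult: "cpoly (a * b) = cpoly a * cpoly b"
  by (simp add: cpoly_def mult_single)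

lemma cpoly_0 [simp]: "cpoly 0 = 0"
  by (simp add: cpoly_def)

lemma cpoly_1 [simp]: "cpoly 1 = 1"
  by (simp add: cpoly_def)

interpretation pm: module "\<lambda>c (p :: 'v mpoly). cpoly c * p"
  by standard (simp_all add: algebra_simps cpoly_add cpoly_mult)

lemma lin_span_eq_span: "lin_span S = pm.span S"
  unfolding lin_span_def pm.span_explicit by blast

lemma lookup_cpoly_mult: "Poly_Mapping.lookup (cpoly c * p) a = c * Poly_Mapping.lookup p a"
  unfolding cpoly_def mult_map_scale_conv_mult[symmetric]
  by (simp add: map.rep_eq when_def)

lemma keys_cpoly_mult_subset: "Poly_Mapping.keys (cpoly c * p) \<subseteq> Poly_Mapping.keys p"
  by (auto simp: in_keys_iff lookup_cpoly_mult)

lemma poly_eq_sum_monom: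
  "p = (\<Sum>a\<in>Poly_Mapping.keys p. cpoly (Poly_Mapping.lookup p a) * monom a)" (is "_ = ?sum")
proof (rule poly_mapping_eqI)
  fix k
  have "Poly_Mapping.lookup ?sum k
      = (\<Sum>a\<in>Poly_Mapping.keys p. if a = k then Poly_Mapping.lookup p a else 0)"
    by (simp add: lookup_sum lookup_cpoly_mult monom_def lookup_single when_def if_distrib
        cong: if_cong)
  also have "\<dots> = Poly_Mapping.lookup p k"
    by (simp add: sum.delta in_keys_iff)
  finally show "Poly_Mapping.lookup p k = Poly_Mapping.lookup ?sum k" ..
qed

lemma in_subspace_if_monoms_in:
  assumes "pm.subspace W" "\<And>a. a \<in> Poly_Mapping.keys p \<Longrightarrow> monom a \<in> W"
  shows "p \<in> W"
  using assms by (subst poly_eq_sum_monom) (intro pm.subspace_sum pm.subspace_scale)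

lemma monom_mult: "monom a * monom b = monom (a + b)"
  by (simp add: monom_def mult_single)

lemma monom_0: "monom 0 = 1"
  by (simp add: monom_def)

lemma sigma_0 [simp]: "sigma s 0 = 0"
  by (simp add: sigma_def)

lemma sigma_add: "sigma s (f + g) = sigma s f + sigma s g"
  unfolding sigma_def by (rule setsum_keys_plus_distrib) (simp_all add: algebra_simps)

lemma sigma_diff: "sigma s (f - g) = sigma s f - sigma s g"
  using sigma_add[of s "f - g" g] by simp

lemma sigma_cpoly_mult: "sigma s (cpoly c * f) = c * sigma s f"
proof -
  have "sigma s (cpoly c * f)
      = (\<Sum>a\<in>Poly_Mapping.keys f. Poly_Mapping.lookup (cpoly c * f) a * s a)"
    unfolding sigma_def using keys_cpoly_mult_subset
    by (intro sum.mono_neutral_left) (auto simp: in_keys_iff)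
  then show ?thesis
    by (simp add: sigma_def lookup_cpoly_mult sum_distrib_left mult.assoc)
qed

lemma sigma_sum: "sigma s (sum f A) = (\<Sum>x\<in>A. sigma s (f x))"
  by (induct A rule: infinite_finite_induct) (auto simp: sigma_add)

lemma ip_0 [simp]: "ip s 0 r = 0"
  by (simp add: ip_def)

lemma ip_sym: "ip s p q = ip s q p"
  by (simp add: ip_def mult.commute)

lemma ip_add: "ip s (p + q) r = ip s p r + ip s q r"
  by (simp add: ip_def distrib_right sigma_add)

lemma ip_add_right: "ip s r (p + q) = ip s r p + ip s r q"
  by (metis ip_sym ip_add)

lemma ip_diff: "ip s (p - q) r = ip s p r - ip s q r"
  by (simp add: ip_def left_diff_distrib sigma_diff)

lemma ip_cpoly_mult: "ip s (cpoly c * p) r = c * ip s p r"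
  by (simp add: ip_def mult.assoc sigma_cpoly_mult)

lemma ip_cpoly_mult_right: "ip s p (cpoly c * q) = c * ip s p q"
  by (metis ip_sym ip_cpoly_mult)

lemma ip_sum: "ip s (sum f A) r = (\<Sum>x\<in>A. ip s (f x) r)"
  by (simp add: ip_def sum_distrib_right sigma_sum)

lemma ip_span_eq_0:
  assumes "p \<in> pm.span S" "\<And>q. q \<in> S \<Longrightarrow> ip s q r = 0"
  shows "ip s p r = 0"
proof -
  have "pm.subspace {p. ip s p r = 0}"
    by (rule pm.subspaceI) (auto simp: ip_add ip_cpoly_mult)
  then show ?thesis
    using assms pm.span_minimal[of S "{p. ip s p r = 0}"] by blast
qed

lemma ip_sum_orthogonal:
  assumes "finite T" "pairwise (\<lambda>q q'. ip s q q' = 0) T" "q\<^sub>0 \<in> T"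
  shows "ip s (\<Sum>q\<in>T. cpoly (c q) * q) q\<^sub>0 = c q\<^sub>0 * ip s q\<^sub>0 q\<^sub>0"
proof -
  have "ip s (\<Sum>q\<in>T. cpoly (c q) * q) q\<^sub>0
      = c q\<^sub>0 * ip s q\<^sub>0 q\<^sub>0 + (\<Sum>q\<in>T - {q\<^sub>0}. c q * ip s q q\<^sub>0)"
    using assms(1,3) by (simp add: sum.remove ip_add ip_sum ip_cpoly_mult)
  also have "(\<Sum>q\<in>T - {q\<^sub>0}. c q * ip s q q\<^sub>0) = 0"
    using assms(2,3) by (intro sum.neutral) (auto simp: pairwise_def)
  finally show ?thesis
    by simp
qed

lemma span_orthogonal_eq_0:
  assumes "u \<in> pm.span P" "pairwise (\<lambda>q q'. ip s q q' = 0) P" "\<And>q. q \<in> P \<Longrightarrow> ip s q q \<noteq> 0"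
    and "\<And>q. q \<in> P \<Longrightarrow> ip s u q = 0"
  shows "u = 0"
proof -
  obtain T c where T: "finite T" "T \<subseteq> P" "u = (\<Sum>q\<in>T. cpoly (c q) * q)"
    using assms(1) unfolding pm.span_explicit by blast
  have "c q = 0" if "q \<in> T" for q
  proof -
    have "c q * ip s q q = 0"
      using ip_sum_orthogonal[OF T(1) pairwise_subset[OF assms(2) T(2)] that, of c] assms(4) that T
      by auto
    then show ?thesis
      using assms(3) that T(2) by auto
  qed
  then show ?thesis
    using T(3) by simp
qed

lemma in_span_if_orthogonal:
  assumes "x \<in> pm.span (P \<union> G)"
    and "pairwise (\<lambda>q q'. ip s q q' = 0) P" "\<And>q. q \<in> P \<Longrightarrow> ip s q q \<noteq> 0"
    and "\<And>q. q \<in> P \<Longrightarrow> ip s x q = 0" "\<And>q g. q \<in> P \<Longrightarrow> g \<in> G \<Longrightarrow> ip s g q = 0"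
  shows "x \<in> pm.span G"
proof -
  obtain u w where x: "x = u + w" and u: "u \<in> pm.span P" and w: "w \<in> pm.span G"
    using assms(1) unfolding pm.span_Un by blast
  have "ip s u q = 0" if "q \<in> P" for q
  proof -
    have "ip s w q = 0"
      using ip_span_eq_0[OF w] assms(5) that by blast
    then show ?thesis
      using assms(4)[OF that] x by (simp add: ip_add)
  qed
  then have "u = 0"
    using span_orthogonal_eq_0[OF u assms(2,3)] by blast
  then show ?thesis
    using x w by simp
qed

lemma proj_diff_in_span: "proj s f P - f \<in> pm.span (set P)"
proof -
  have "sum_list (map (\<lambda>q. cpoly (c q) * q) P) \<in> pm.span Q" if "set P \<subseteq> Q" for c Q
    using that by (induct P) (auto intro: pm.span_zero pm.span_add pm.span_scale pm.span_base)
  then show ?thesis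
    unfolding proj_def using pm.span_neg by fastforce
qed

lemma ip_proj_eq_0:
  assumes "distinct P" "pairwise (\<lambda>q q'. ip s q q' = 0) (set P)"
    and "\<And>q. q \<in> set P \<Longrightarrow> ip s q q \<noteq> 0" "q\<^sub>0 \<in> set P"
  shows "ip s (proj s f P) q\<^sub>0 = 0"
proof -
  have "ip s (proj s f P) q\<^sub>0 = ip s f q\<^sub>0 - ip s f q\<^sub>0 / ip s q\<^sub>0 q\<^sub>0 * ip s q\<^sub>0 q\<^sub>0"
    unfolding proj_def using assms(1,2,4)
    by (simp add: ip_diff sum_list_distinct_conv_sum_set ip_sum_orthogonal)
  then show ?thesis
    using assms(3,4) by simp
qed

section \<open>Degrees and the annihilator\<close>

lemma mdeg_0 [simp]: "mdeg 0 = 0"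
  by (simp add: mdeg_def)

lemma mdeg_eq_sum: "mdeg (a :: 'v::finite mon) = (\<Sum>v\<in>UNIV. Poly_Mapping.lookup a v)"
  unfolding mdeg_def by (rule sum.mono_neutral_left) (auto simp: in_keys_iff)

lemma mdeg_add: "mdeg ((a :: 'v::finite mon) + b) = mdeg a + mdeg b"
  by (simp add: mdeg_eq_sum lookup_add sum.distrib)

lemma lookup_le_mdeg: "Poly_Mapping.lookup (a :: 'v::finite mon) v \<le> mdeg a"
  unfolding mdeg_eq_sum by (rule member_le_sum) auto

lemma mdeg_eq_0_iff: "mdeg (a :: 'v::finite mon) = 0 \<longleftrightarrow> a = 0"
  by (metis le_zero_eq lookup_le_mdeg lookup_zero poly_mapping_eqI mdeg_def keys_zero sum.empty)

lemma mdeg_single_1: "mdeg (Poly_Mapping.single v (1 :: nat)) = 1"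
  by (simp add: mdeg_def)

lemma mdeg_Suc_decomp:
  assumes "mdeg (a :: 'v::finite mon) = Suc n"
  obtains a' v where "a = a' + Poly_Mapping.single v 1" "mdeg a' = n"
proof -
  obtain v where v: "Poly_Mapping.lookup a v > 0"
    using assms mdeg_eq_0_iff[of a] by (metis gr0I lookup_zero nat.distinct(1) poly_mapping_eqI)
  define a' where "a' = a - Poly_Mapping.single v 1"
  have a: "a = a' + Poly_Mapping.single v 1"
    by (rule poly_mapping_eqI)
       (use v in \<open>auto simp: a'_def lookup_add lookup_minus lookup_single when_def\<close>)
  then have "mdeg a' = n"
    using assms mdeg_add[of a' "Poly_Mapping.single v 1"] mdeg_single_1[of v] by simp
  with a show thesis
    using that by blast
qed

lemma finite_mdeg_le: "finite {a :: 'v::finite mon. mdeg a \<le> d}"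
proof -
  have "Poly_Mapping.lookup ` {a :: 'v mon. mdeg a \<le> d} \<subseteq> {f. \<forall>x. f x \<in> {..d}}"
    using lookup_le_mdeg order_trans by fastforce
  moreover have "finite {f :: 'v \<Rightarrow> nat. \<forall>x. f x \<in> {..d}}"
    using finite_set_of_finite_funs[of "UNIV :: 'v set" "{..d}" 0] by simp
  ultimately have "finite (Poly_Mapping.lookup ` {a :: 'v mon. mdeg a \<le> d})"
    by (rule finite_subset)
  then show ?thesis
    by (rule finite_imageD) (auto intro: inj_onI poly_mapping_eqI)
qed

lemma mdvd_refl: "mdvd a a"
  by (simp add: mdvd_def)

lemma mdvd_eq_add: "mdvd g a \<Longrightarrow> a = (a - g) + g"
  by (rule poly_mapping_eqI) (auto simp: lookup_add lookup_minus mdvd_def)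

lemma deg_le_subspace: "pm.subspace {p. deg_le t p}"
  by (rule pm.subspaceI)
     (auto simp: deg_le_def dest: keys_add[THEN subsetD] keys_cpoly_mult_subset[THEN subsetD])

lemma deg_le_0 [simp]: "deg_le t 0"
  by (simp add: deg_le_def)

lemma deg_le_add: "deg_le t p \<Longrightarrow> deg_le t q \<Longrightarrow> deg_le t (p + q)"
  using pm.subspace_add[OF deg_le_subspace] by blast

lemma deg_le_cpoly_mult: "deg_le t p \<Longrightarrow> deg_le t (cpoly c * p)"
  using pm.subspace_scale[OF deg_le_subspace] by blast

lemma deg_le_mono: "deg_le t p \<Longrightarrow> t \<le> t' \<Longrightarrow> deg_le t' p"
  by (auto simp: deg_le_def)

lemma deg_le_monom: "deg_le t (monom a) \<longleftrightarrow> mdeg a \<le> t"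
  by (simp add: deg_le_def monom_def)

lemma deg_le_mult: "deg_le t p \<Longrightarrow> deg_le t' q \<Longrightarrow> deg_le (t + t') (p * (q :: 'v::finite mpoly))"
  unfolding deg_le_def using keys_mult[of p q] by (force simp: mdeg_add)

lemma sigma_mult_eq_0_if_square_eq_0:
  assumes pos: "positive_functional d s" and p: "deg_le (d + 1) p" and q: "deg_le (d + 1) q"
    and pp: "sigma s (p * p) = 0"
  shows "sigma s (p * q) = 0"
proof -
  define x where "x = ip s p q"
  define Q where "Q = ip s q q"
  have "Q \<ge> 0"
    using pos q unfolding Q_def ip_def positive_functional_def by blast
  \<comment> \<open>With this u, \<sigma>((p - u q)^2) = -u^2 (Q + 2), which is nonnegative only for u = 0.\<close>
  define u where "u = x / (Q + 1)"
  have x: "x = u * (Q + 1)"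
    using \<open>Q \<ge> 0\<close> unfolding u_def by simp
  define r where "r = p + cpoly (- u) * q"
  have "deg_le (d + 1) r"
    unfolding r_def using p q by (intro deg_le_add deg_le_cpoly_mult)
  then have "ip s r r \<ge> 0"
    using pos unfolding ip_def positive_functional_def by blast
  also have "ip s r r = ip s p p - 2 * u * x + u * u * Q"
    unfolding r_def x_def Q_def
    by (simp only: ip_add ip_add_right ip_cpoly_mult ip_cpoly_mult_right)
       (simp add: ip_sym[of s q p] algebra_simps)
  also have "ip s p p = 0"
    using pp by (simp add: ip_def)
  finally have "u * u * (Q + 2) \<le> 0"
    unfolding x by (simp add: algebra_simps)
  then have "u = 0"
    using \<open>Q \<ge> 0\<close> by (smt (verit) mult_nonneg_nonneg mult_pos_pos zero_less_mult_iff)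
  then show ?thesis
    using x unfolding x_def ip_def by simp
qed

text \<open>The annihilator tested against one degree more than the polynomial itself: this extra degree
  is what allows a multiplication by a variable to stay inside it.\<close>

definition Ann_succ :: "('v mon \<Rightarrow> real) \<Rightarrow> nat \<Rightarrow> 'v mpoly set" where
  "Ann_succ s d = {p. deg_le d p \<and> (\<forall>q. deg_le (d + 1) q \<longrightarrow> sigma s (p * q) = 0)}"

lemma in_Ann_succI:
  assumes "positive_functional d s" "deg_le d p" "sigma s (p * p) = 0"
  shows "p \<in> Ann_succ s d"
  using sigma_mult_eq_0_if_square_eq_0[OF assms(1) deg_le_mono[OF assms(2)] _ assms(3)] assms(2)
  unfolding Ann_succ_def by auto

lemma Ann_succ_subset_Ann: "Ann_succ s d \<subseteq> Ann s d"
  unfolding Ann_succ_def Ann_def using deg_le_mono by fastforce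

lemma Ann_subspace: "pm.subspace (Ann s d)"
  by (rule pm.subspaceI)
     (auto simp: Ann_def deg_le_add deg_le_cpoly_mult distrib_right sigma_add mult.assoc
       sigma_cpoly_mult)

lemma var_mult_in_Ann_succ:
  fixes r :: "'v::finite mpoly" and v :: 'v
  assumes pos: "positive_functional d s" and r: "r \<in> Ann_succ s d" "deg_le e r" "e < d"
  defines "x \<equiv> monom (Poly_Mapping.single v 1)"
  shows "x * r \<in> Ann_succ s d"
proof (rule in_Ann_succI[OF pos])
  have x: "deg_le 1 x"
    unfolding x_def deg_le_monom mdeg_single_1 by simp
  show "deg_le d (x * r)"
    using deg_le_mult[OF x r(2)] r(3) by (auto intro: deg_le_mono)
  have "deg_le (d + 1) (x * (x * r))"
    using deg_le_mult[OF x deg_le_mult[OF x r(2)]] r(3) by (auto intro: deg_le_mono)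
  then have "sigma s (r * (x * (x * r))) = 0"
    using r(1) unfolding Ann_succ_def by blast
  then show "sigma s ((x * r) * (x * r)) = 0"
    by (simp only: ac_simps)
qed

lemma monom_mult_in_Ann_succ:
  fixes p :: "'v::finite mpoly"
  assumes pos: "positive_functional d s" and p: "p \<in> Ann_succ s d" "deg_le e p"
  shows "mdeg \<delta> + e \<le> d \<Longrightarrow> monom \<delta> * p \<in> Ann_succ s d"
proof (induction "mdeg \<delta>" arbitrary: \<delta>)
  case 0
  then show ?case
    using p by (simp add: mdeg_eq_0_iff monom_0)
next
  case (Suc n)
  obtain \<delta>' v where \<delta>: "\<delta> = \<delta>' + Poly_Mapping.single v 1" "mdeg \<delta>' = n"
    using mdeg_Suc_decomp Suc.hyps(2)[symmetric] by blast
  have "monom \<delta>' * p \<in> Ann_succ s d"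
    using Suc \<delta> by simp
  moreover have "deg_le (n + e) (monom \<delta>' * p)"
    using deg_le_mult[OF _ p(2), of n "monom \<delta>'"] \<delta>(2) by (simp add: deg_le_monom)
  ultimately have "monom (Poly_Mapping.single v 1) * (monom \<delta>' * p) \<in> Ann_succ s d"
    using Suc.hyps(2) Suc.prems \<delta> by (intro var_mult_in_Ann_succ[OF pos]) auto
  then show ?case
    unfolding \<delta>(1) monom_mult[symmetric] by (simp only: ac_simps)
qed

section \<open>Monomial orders\<close>

lemma monomial_order_refl: "monomial_order le \<Longrightarrow> le a a"
  unfolding monomial_order_def by blast

lemma monomial_order_antisym: "monomial_order le \<Longrightarrow> le a b \<Longrightarrow> le b a \<Longrightarrow> a = b"
  unfolding monomial_order_def by blast

lemma monomial_order_trans: "monomial_order le \<Longrightarrow> le a b \<Longrightarrow> le b c \<Longrightarrow> le a c"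
  unfolding monomial_order_def by blast

lemma monomial_order_total: "monomial_order le \<Longrightarrow> le a b \<or> le b a"
  unfolding monomial_order_def by blast

lemma monomial_order_add_left: "monomial_order le \<Longrightarrow> le a b \<Longrightarrow> le (c + a) (c + b)"
  unfolding monomial_order_def by (metis add.commute)

lemma degree_compatible_mdeg_le:
  assumes "monomial_order le" "degree_compatible le" "le a b"
  shows "mdeg a \<le> mdeg b"
  using assms monomial_order_antisym unfolding degree_compatible_def by (metis not_le)

lemma wfp_strict_monomial_order:
  fixes le :: "'v::finite mon \<Rightarrow> 'v mon \<Rightarrow> bool"
  assumes mo: "monomial_order le" and dc: "degree_compatible le"
  shows "wfp (\<lambda>a b. le a b \<and> a \<noteq> b)"
proof (rule wfp_if_convertible_to_nat)
  fix a b assume ab: "le a b \<and> a \<noteq> b"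
  have "finite {c. le c b}"
    using degree_compatible_mdeg_le[OF mo dc]
    by (intro finite_subset[OF _ finite_mdeg_le[of "mdeg b"]]) auto
  moreover have "{c. le c a} \<subset> {c. le c b}"
    using ab monomial_order_trans[OF mo] monomial_order_antisym[OF mo] monomial_order_refl[OF mo]
    by blast
  ultimately show "card {c. le c a} < card {c. le c b}"
    by (rule psubset_card_mono)
qed

definition keys_below :: "('v mon \<Rightarrow> 'v mon \<Rightarrow> bool) \<Rightarrow> 'v mon \<Rightarrow> 'v mpoly \<Rightarrow> bool" where
  "keys_below le \<beta> p \<longleftrightarrow> (\<forall>a\<in>Poly_Mapping.keys p. le a \<beta>)"

definition keys_strictly_below :: "('v mon \<Rightarrow> 'v mon \<Rightarrow> bool) \<Rightarrow> 'v mon \<Rightarrow> 'v mpoly \<Rightarrow> bool" where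
  "keys_strictly_below le \<beta> p \<longleftrightarrow> (\<forall>a\<in>Poly_Mapping.keys p. le a \<beta> \<and> a \<noteq> \<beta>)"

lemma keys_below_subspace: "pm.subspace {p. keys_below le \<beta> p}"
  by (rule pm.subspaceI)
     (auto simp: keys_below_def dest: keys_add[THEN subsetD] keys_cpoly_mult_subset[THEN subsetD])

lemma keys_strictly_below_subspace: "pm.subspace {p. keys_strictly_below le \<beta> p}"
  by (rule pm.subspaceI)
     (auto simp: keys_strictly_below_def
       dest: keys_add[THEN subsetD] keys_cpoly_mult_subset[THEN subsetD])

lemma keys_below_monom: "le a \<beta> \<Longrightarrow> keys_below le \<beta> (monom a)"
  by (simp add: keys_below_def monom_def)

lemma deg_le_if_keys_below:
  "monomial_order le \<Longrightarrow> degree_compatible le \<Longrightarrow> keys_below le \<beta> p \<Longrightarrow> deg_le (mdeg \<beta>) p"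
  using degree_compatible_mdeg_le unfolding keys_below_def deg_le_def by blast

lemma keys_below_span:
  assumes mo: "monomial_order le"
    and S: "\<And>q. q \<in> S \<Longrightarrow> \<exists>\<beta>'. keys_below le \<beta>' q \<and> le \<beta>' \<beta>"
    and p: "p \<in> pm.span S"
  shows "keys_below le \<beta> p"
proof -
  have "S \<subseteq> {p. keys_below le \<beta> p}"
    using S monomial_order_trans[OF mo] unfolding keys_below_def by blast
  then show ?thesis
    using pm.span_minimal[OF _ keys_below_subspace] p by blast
qed

lemma keys_strictly_below_span:
  assumes mo: "monomial_order le"
    and S: "\<And>q. q \<in> S \<Longrightarrow> \<exists>\<beta>'. keys_below le \<beta>' q \<and> le \<beta>' \<beta> \<and> \<beta>' \<noteq> \<beta>"
    and p: "p \<in> pm.span S"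
  shows "keys_strictly_below le \<beta> p"
proof -
  have "S \<subseteq> {p. keys_strictly_below le \<beta> p}"
    using S monomial_order_trans[OF mo] monomial_order_antisym[OF mo]
    unfolding keys_below_def keys_strictly_below_def by blast
  then show ?thesis
    using pm.span_minimal[OF _ keys_strictly_below_subspace] p by blast
qed

lemma monomial_order_has_least:
  assumes mo: "monomial_order le" and "finite S" "S \<noteq> {}"
  shows "\<exists>m\<in>S. \<forall>c\<in>S. le m c"
  using assms(2,3)
proof (induction S rule: finite_ne_induct)
  case (singleton x)
  then show ?case
    using monomial_order_refl[OF mo] by auto
next
  case (insert x F)
  then obtain m where m: "m \<in> F" "\<forall>c\<in>F. le m c"
    by blast
  show ?case
  proof (cases "le x m")
    case True
    then show ?thesis
      using m monomial_order_trans[OF mo] monomial_order_refl[OF mo] by blast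
  next
    case False
    then show ?thesis
      using m monomial_order_total[OF mo] by blast
  qed
qed

lemma sorted_wrt_exists:
  assumes mo: "monomial_order le" and "finite S"
  shows "\<exists>xs. distinct xs \<and> set xs = S \<and> sorted_wrt le xs"
  using assms(2)
proof (induction "card S" arbitrary: S)
  case 0
  then show ?case
    by auto
next
  case (Suc n)
  then have "S \<noteq> {}"
    by auto
  then obtain m where m: "m \<in> S" "\<forall>c\<in>S. le m c"
    using monomial_order_has_least[OF mo Suc.prems] by blast
  have "card (S - {m}) = n"
    using Suc.hyps(2) m(1) by simp
  then obtain xs where "distinct xs" "set xs = S - {m}" "sorted_wrt le xs"
    using Suc.hyps(1)[of "S - {m}"] Suc.prems by blast
  with m show ?case
    by (intro exI[of _ "m # xs"]) auto
qed

lemma sorted_wrt_unique: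
  assumes mo: "monomial_order le"
  shows "distinct xs \<Longrightarrow> sorted_wrt le xs \<Longrightarrow> distinct ys \<Longrightarrow> sorted_wrt le ys \<Longrightarrow>
    set xs = set ys \<Longrightarrow> xs = ys"
proof (induction xs arbitrary: ys)
  case Nil
  then show ?case
    by simp
next
  case (Cons x xs)
  then obtain y ys' where ys: "ys = y # ys'"
    by (cases ys) auto
  have "y \<in> set (x # xs)" "x \<in> set ys"
    using Cons.prems(5) ys by auto
  then have "le x y" "le y x"
    using Cons.prems ys monomial_order_refl[OF mo] by auto
  then have xy: "x = y"
    using monomial_order_antisym[OF mo] by blast
  have "set xs = set (x # xs) - {x}" "set ys' = set ys - {y}"
    using Cons.prems(1,3) ys by auto
  then have "set xs = set ys'"
    using Cons.prems(5) xy by auto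
  then show ?case
    using Cons ys xy by auto
qed

lemma sort_by:
  assumes "monomial_order le" "finite S"
  shows "distinct (sort_by le S) \<and> set (sort_by le S) = S \<and> sorted_wrt le (sort_by le S)"
proof -
  have "\<exists>!xs. distinct xs \<and> set xs = S \<and> sorted_wrt le xs"
    using sorted_wrt_exists[OF assms] sorted_wrt_unique[OF assms(1)] by blast
  then show ?thesis
    unfolding sort_by_def by (rule theI')
qed

lemma finite_candidates: "finite (candidates d b (l :: 'v::finite mon list))"
  unfolding candidates_def by (rule finite_subset[OF _ finite_mdeg_le]) auto

lemma lowest_nonempty: "S \<noteq> {} \<Longrightarrow> lowest S \<noteq> {}"
  unfolding lowest_def using ex_has_least_nat[of "\<lambda>a. a \<in> S" _ mdeg] by blast

lemma next_n:
  fixes l :: "'v::finite mon list"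
  assumes "monomial_order le"
  shows "distinct (next_n le d (b, ps, l, ks)) \<and> set (next_n le d (b, ps, l, ks)) = lowest (candidates d b l)
    \<and> sorted_wrt le (next_n le d (b, ps, l, ks))"
  unfolding next_n_def using sort_by[OF assms, of "lowest (candidates d b l)"] finite_candidates[of d b l]
  by (simp add: lowest_def)

lemma next_n_initial:
  assumes mo: "monomial_order le"
  shows "next_n le d ([], [], [], []) = [0 :: 'v::finite mon]"
proof -
  have "lowest (candidates d [] ([] :: 'v mon list)) = {0}"
  proof (rule set_eqI)
    fix a :: "'v mon"
    have "0 \<in> candidates d [] ([] :: 'v mon list)"
      by (simp add: candidates_def)
    show "a \<in> lowest (candidates d [] []) \<longleftrightarrow> a \<in> {0}"
    proof
      assume "a \<in> lowest (candidates d [] [])"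
      then have "mdeg a \<le> mdeg (0 :: 'v mon)"
        using \<open>0 \<in> candidates d [] []\<close> unfolding lowest_def by blast
      then show "a \<in> {0}"
        using mdeg_eq_0_iff[of a] by simp
    qed (auto simp: lowest_def candidates_def)
  qed
  then show ?thesis
    using next_n[OF mo, of d "[]" "[]" "[]" "[]"] sorted_wrt_unique[OF mo, of _ "[0]"] by simp
qed

section \<open>Invariants of the algorithm\<close>

definition p_below :: "('v mon \<Rightarrow> 'v mon \<Rightarrow> bool) \<Rightarrow> 'v mon \<Rightarrow> 'v mon list \<Rightarrow> 'v mpoly list
    \<Rightarrow> 'v mpoly set" where
  "p_below le \<beta> b ps = {q. \<exists>\<beta>'. (\<beta>', q) \<in> set (zip b ps) \<and> le \<beta>' \<beta> \<and> \<beta>' \<noteq> \<beta>}"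

lemma p_below_append:
  "length b = length ps \<Longrightarrow> p_below le \<beta> b ps \<subseteq> p_below le \<beta> (b @ [a]) (ps @ [pa])"
  unfolding p_below_def by (auto simp: zip_append)

locale alg_inv =
  fixes le :: "'v::finite mon \<Rightarrow> 'v mon \<Rightarrow> bool" and s :: "'v mon \<Rightarrow> real" and d :: nat
    and b :: "'v mon list" and ps :: "'v mpoly list" and l :: "'v mon list" and ks :: "'v mpoly list"
  assumes length_ps: "length b = length ps"
    and length_ks: "length l = length ks"
    and distinct_ps: "distinct ps"
    and orthogonal_ps: "pairwise (\<lambda>q q'. ip s q q' = 0) (set ps)"
    and ip_self_ps: "q \<in> set ps \<Longrightarrow> ip s q q \<noteq> 0"
    and ps_leading: "(\<beta>, q) \<in> set (zip b ps) \<Longrightarrow>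
      keys_below le \<beta> q \<and> q - monom \<beta> \<in> pm.span (p_below le \<beta> b ps) \<and> mdeg \<beta> \<le> d"
    and ks_leading: "(\<gamma>, k) \<in> set (zip l ks) \<Longrightarrow>
      keys_below le \<gamma> k \<and> k - monom \<gamma> \<in> pm.span (p_below le \<gamma> b ps) \<and> ip s k k = 0 \<and> mdeg \<gamma> \<le> d"
begin

lemma p_below_keys_below:
  "q \<in> p_below le \<beta> b ps \<Longrightarrow> \<exists>\<beta>'. keys_below le \<beta>' q \<and> le \<beta>' \<beta> \<and> \<beta>' \<noteq> \<beta>"
  unfolding p_below_def using ps_leading by blast

lemma ps_subset_p_below:
  assumes "\<forall>\<beta>\<in>set b. le \<beta> a \<and> \<beta> \<noteq> a"
  shows "set ps \<subseteq> p_below le a b ps"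
proof
  fix q assume "q \<in> set ps"
  then obtain \<beta> where "(\<beta>, q) \<in> set (zip b ps)"
    using in_set_impl_in_set_zip2[OF length_ps] by blast
  then show "q \<in> p_below le a b ps"
    using assms unfolding p_below_def by (blast dest: set_zip_leftD)
qed

lemma proj_monom:
  assumes mo: "monomial_order le" and below: "\<forall>\<beta>\<in>set b. le \<beta> a \<and> \<beta> \<noteq> a"
  defines "pa \<equiv> proj s (monom a) ps"
  shows "pa - monom a \<in> pm.span (p_below le a b ps)" and "keys_below le a pa"
    and "q \<in> set ps \<Longrightarrow> ip s pa q = 0"
proof -
  show span: "pa - monom a \<in> pm.span (p_below le a b ps)"
    using proj_diff_in_span[of s "monom a" ps] pm.span_mono[OF ps_subset_p_below[OF below]]
    unfolding pa_def by blast
  have "keys_below le a (pa - monom a)"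
    using keys_below_span[OF mo _ span] p_below_keys_below by blast
  moreover have "keys_below le a (monom a)"
    by (rule keys_below_monom[OF monomial_order_refl[OF mo]])
  ultimately have "keys_below le a ((pa - monom a) + monom a)"
    using pm.subspace_add[OF keys_below_subspace] by blast
  then show "keys_below le a pa"
    by simp
  show "q \<in> set ps \<Longrightarrow> ip s pa q = 0"
    unfolding pa_def by (rule ip_proj_eq_0[OF distinct_ps orthogonal_ps ip_self_ps])
qed

lemma alg_inv_append_b:
  assumes mo: "monomial_order le" and below: "\<forall>\<beta>\<in>set b. le \<beta> a \<and> \<beta> \<noteq> a" and "mdeg a \<le> d"
    and nonnull: "ip s (proj s (monom a) ps) (proj s (monom a) ps) \<noteq> 0"
  shows "alg_inv le s d (b @ [a]) (ps @ [proj s (monom a) ps]) l ks"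
proof -
  define pa where "pa = proj s (monom a) ps"
  note pa = proj_monom[OF mo below, folded pa_def]
  have "pa \<notin> set ps"
    using pa(3) nonnull unfolding pa_def by blast
  have zip: "set (zip (b @ [a]) (ps @ [pa])) = insert (a, pa) (set (zip b ps))"
    using length_ps by (simp add: zip_append)
  have span_mono: "pm.span (p_below le \<beta> b ps) \<subseteq> pm.span (p_below le \<beta> (b @ [a]) (ps @ [pa]))"
    for \<beta>
    by (rule pm.span_mono[OF p_below_append[OF length_ps]])
  have "alg_inv le s d (b @ [a]) (ps @ [pa]) l ks"
  proof (rule alg_inv.intro)
    show "pairwise (\<lambda>q q'. ip s q q' = 0) (set (ps @ [pa]))"
      using orthogonal_ps pa(3) ip_sym[of s _ pa] by (auto simp: pairwise_insert)
    show "ip s q q \<noteq> 0" if "q \<in> set (ps @ [pa])" for q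
      using that ip_self_ps nonnull unfolding pa_def by auto
    show "keys_below le \<beta> q \<and> q - monom \<beta> \<in> pm.span (p_below le \<beta> (b @ [a]) (ps @ [pa]))
        \<and> mdeg \<beta> \<le> d" if "(\<beta>, q) \<in> set (zip (b @ [a]) (ps @ [pa]))" for \<beta> q
      using that[unfolded zip] pa(1,2) \<open>mdeg a \<le> d\<close> ps_leading span_mono by blast
    show "keys_below le \<gamma> k \<and> k - monom \<gamma> \<in> pm.span (p_below le \<gamma> (b @ [a]) (ps @ [pa]))
        \<and> ip s k k = 0 \<and> mdeg \<gamma> \<le> d" if "(\<gamma>, k) \<in> set (zip l ks)" for \<gamma> k
      using that ks_leading span_mono by blast
  qed (use length_ps length_ks distinct_ps \<open>pa \<notin> set ps\<close> in auto)
  then show ?thesis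
    unfolding pa_def .
qed

lemma alg_inv_append_l:
  assumes mo: "monomial_order le" and below: "\<forall>\<beta>\<in>set b. le \<beta> a \<and> \<beta> \<noteq> a" and "mdeg a \<le> d"
    and null: "ip s (proj s (monom a) ps) (proj s (monom a) ps) = 0"
  shows "alg_inv le s d b ps (l @ [a]) (ks @ [proj s (monom a) ps])"
proof -
  define pa where "pa = proj s (monom a) ps"
  note pa = proj_monom[OF mo below, folded pa_def]
  have zip: "set (zip (l @ [a]) (ks @ [pa])) = insert (a, pa) (set (zip l ks))"
    using length_ks by (simp add: zip_append)
  have "alg_inv le s d b ps (l @ [a]) (ks @ [pa])"
  proof (rule alg_inv.intro)
    show "keys_below le \<gamma> k \<and> k - monom \<gamma> \<in> pm.span (p_below le \<gamma> b ps) \<and> ip s k k = 0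
        \<and> mdeg \<gamma> \<le> d" if "(\<gamma>, k) \<in> set (zip (l @ [a]) (ks @ [pa]))" for \<gamma> k
      using that[unfolded zip] pa(1,2) null[folded pa_def] \<open>mdeg a \<le> d\<close> ks_leading by blast
  qed (use length_ps length_ks distinct_ps orthogonal_ps ip_self_ps ps_leading in auto)
  then show ?thesis
    unfolding pa_def .
qed

lemma alg_inv_proc_mon:
  assumes "monomial_order le" "\<forall>\<beta>\<in>set b. le \<beta> a \<and> \<beta> \<noteq> a" "mdeg a \<le> d"
    and "proc_mon s a (b, ps, l, ks) = (b', ps', l', ks')"
  shows "alg_inv le s d b' ps' l' ks' \<and> (b' = b @ [a] \<and> l' = l \<or> b' = b \<and> l' = l @ [a])"
  using assms alg_inv_append_b alg_inv_append_l
  unfolding proc_mon_def Let_def by (auto split: if_splits)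

end

lemma alg_inv_fold_proc_mon:
  assumes mo: "monomial_order le"
  shows "alg_inv le s d b ps l ks \<Longrightarrow> sorted_wrt le n \<Longrightarrow> distinct n \<Longrightarrow>
    (\<forall>\<beta>\<in>set b. \<forall>a\<in>set n. le \<beta> a \<and> \<beta> \<noteq> a) \<Longrightarrow> (\<forall>a\<in>set n. mdeg a \<le> d) \<Longrightarrow>
    fold (proc_mon s) n (b, ps, l, ks) = (b', ps', l', ks') \<Longrightarrow>
    alg_inv le s d b' ps' l' ks' \<and> set b \<subseteq> set b' \<and> set b' \<subseteq> set n \<union> set b \<and>
    set l \<subseteq> set l' \<and> set n \<subseteq> set b' \<union> set l'"
proof (induction n arbitrary: b ps l ks)
  case Nil
  then show ?case
    by simp
next
  case (Cons a n)
  obtain b\<^sub>1 ps\<^sub>1 l\<^sub>1 ks\<^sub>1 where step: "proc_mon s a (b, ps, l, ks) = (b\<^sub>1, ps\<^sub>1, l\<^sub>1, ks\<^sub>1)"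
    by (metis prod_cases4)
  have inv: "alg_inv le s d b\<^sub>1 ps\<^sub>1 l\<^sub>1 ks\<^sub>1"
    and grow: "b\<^sub>1 = b @ [a] \<and> l\<^sub>1 = l \<or> b\<^sub>1 = b \<and> l\<^sub>1 = l @ [a]"
    using alg_inv.alg_inv_proc_mon[OF Cons.prems(1) mo _ _ step] Cons.prems(4,5) by auto
  have "\<forall>\<beta>\<in>set b\<^sub>1. \<forall>a'\<in>set n. le \<beta> a' \<and> \<beta> \<noteq> a'"
    using grow Cons.prems(2-4) by auto
  then have "alg_inv le s d b' ps' l' ks' \<and> set b\<^sub>1 \<subseteq> set b' \<and> set b' \<subseteq> set n \<union> set b\<^sub>1 \<and>
      set l\<^sub>1 \<subseteq> set l' \<and> set n \<subseteq> set b' \<union> set l'"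
    using Cons.IH[OF inv] Cons.prems(2,3,5,6) step by auto
  then show ?case
    using grow by auto
qed

text \<open>The degree condition makes the next batch of monomials lie strictly above all of b.\<close>

definition round_inv :: "('v::finite mon \<Rightarrow> 'v mon \<Rightarrow> bool) \<Rightarrow> ('v mon \<Rightarrow> real) \<Rightarrow> nat \<Rightarrow> 'v state
    \<Rightarrow> bool" where
  "round_inv le s d st \<longleftrightarrow> (case st of (b, ps, l, ks) \<Rightarrow>
     alg_inv le s d b ps l ks \<and> (\<forall>\<beta>\<in>set b. \<forall>a\<in>candidates d b l. mdeg \<beta> < mdeg a))"

lemma mdeg_lowest_less: "x \<in> lowest S \<Longrightarrow> a \<in> S - lowest S \<Longrightarrow> mdeg x < mdeg a"
  unfolding lowest_def by (auto simp: not_le intro: le_less_trans)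

lemma round_inv_fold_next_n:
  fixes le :: "'v::finite mon \<Rightarrow> 'v mon \<Rightarrow> bool"
  assumes mo: "monomial_order le" and dc: "degree_compatible le"
    and inv: "round_inv le s d (b, ps, l, ks)" and n: "n = next_n le d (b, ps, l, ks)"
  shows "round_inv le s d (fold (proc_mon s) n (b, ps, l, ks))"
proof -
  obtain b' ps' l' ks' where st': "fold (proc_mon s) n (b, ps, l, ks) = (b', ps', l', ks')"
    by (metis prod_cases4)
  have n_lowest: "distinct n" "set n = lowest (candidates d b l)" "sorted_wrt le n"
    using next_n[OF mo] n by auto
  have inv0: "alg_inv le s d b ps l ks"
    and deg0: "\<forall>\<beta>\<in>set b. \<forall>a\<in>candidates d b l. mdeg \<beta> < mdeg a"
    using inv unfolding round_inv_def by auto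
  have n_cand: "set n \<subseteq> candidates d b l"
    using n_lowest(2) unfolding lowest_def by auto
  have "\<forall>\<beta>\<in>set b. \<forall>a\<in>set n. le \<beta> a \<and> \<beta> \<noteq> a"
    using deg0 n_cand dc unfolding degree_compatible_def by blast
  moreover have "\<forall>a\<in>set n. mdeg a \<le> d"
    using n_cand unfolding candidates_def by auto
  ultimately have inv': "alg_inv le s d b' ps' l' ks'" and sets: "set b \<subseteq> set b'"
    "set b' \<subseteq> set n \<union> set b" "set l \<subseteq> set l'" "set n \<subseteq> set b' \<union> set l'"
    using alg_inv_fold_proc_mon[OF mo inv0 n_lowest(3,1) _ _ st'] by auto
  have cand': "a \<in> candidates d b l - lowest (candidates d b l)" if "a \<in> candidates d b' l'" for a
  proof -
    have "a \<notin> set n"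
      using that sets(4) mdvd_refl unfolding candidates_def by blast
    then show ?thesis
      using that sets(1,3) n_lowest(2) unfolding candidates_def by blast
  qed
  have "mdeg \<beta> < mdeg a" if "\<beta> \<in> set b'" "a \<in> candidates d b' l'" for \<beta> a
  proof -
    from that(1) sets(2) n_lowest(2) consider "\<beta> \<in> lowest (candidates d b l)" | "\<beta> \<in> set b"
      by blast
    then show ?thesis
      by cases (use cand'[OF that(2)] deg0 mdeg_lowest_less in blast)+
  qed
  then show ?thesis
    using inv' st' unfolding round_inv_def by auto
qed

lemma alg_iter_round_inv:
  fixes le :: "'v::finite mon \<Rightarrow> 'v mon \<Rightarrow> bool"
  assumes mo: "monomial_order le" and dc: "degree_compatible le"
  shows "alg_iter le s d N = (st, n) \<Longrightarrow> round_inv le s d st \<and> n = next_n le d st"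
proof (induction N arbitrary: st n)
  case 0
  then show ?case
    using next_n_initial[OF mo] by (auto simp: round_inv_def alg_inv_def candidates_def)
next
  case (Suc N)
  obtain st\<^sub>0 n\<^sub>0 where prev: "alg_iter le s d N = (st\<^sub>0, n\<^sub>0)"
    by fastforce
  then have "round_inv le s d st\<^sub>0" "n\<^sub>0 = next_n le d st\<^sub>0"
    using Suc.IH by auto
  then show ?case
    using Suc.prems prev round_inv_fold_next_n[OF mo dc]
    by (cases st\<^sub>0) (auto simp: Let_def split: if_splits)
qed

lemma alg_output:
  fixes le :: "'v::finite mon \<Rightarrow> 'v mon \<Rightarrow> bool"
  assumes mo: "monomial_order le" and dc: "degree_compatible le"
    and out: "alg_output le s d (b, ps, l, ks)"
  shows "alg_inv le s d b ps l ks" and "mdeg \<alpha> \<le> d \<Longrightarrow> \<alpha> \<in> set b \<or> (\<exists>\<gamma>\<in>set l. mdvd \<gamma> \<alpha>)"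
proof -
  obtain N where "alg_iter le s d N = ((b, ps, l, ks), [])"
    using out unfolding alg_output_def by blast
  then have inv: "round_inv le s d (b, ps, l, ks)" and "next_n le d (b, ps, l, ks) = []"
    using alg_iter_round_inv[OF mo dc] by auto
  then have "candidates d b l = {}"
    using next_n[OF mo, of d b ps l ks] lowest_nonempty by auto
  then show "mdeg \<alpha> \<le> d \<Longrightarrow> \<alpha> \<in> set b \<or> (\<exists>\<gamma>\<in>set l. mdvd \<gamma> \<alpha>)"
    unfolding candidates_def by blast
  show "alg_inv le s d b ps l ks"
    using inv unfolding round_inv_def by simp
qed

section \<open>Spans below a monomial\<close>

definition k_gens :: "('v mon \<Rightarrow> 'v mon \<Rightarrow> bool) \<Rightarrow> 'v mon \<Rightarrow> 'v mon list \<Rightarrow> 'v mpoly list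
    \<Rightarrow> 'v mpoly set" where
  "k_gens le \<alpha> l ks = {monom \<delta> * k | \<delta> \<gamma> k. (\<gamma>, k) \<in> set (zip l ks) \<and> le (\<delta> + \<gamma>) \<alpha>}"

lemma k_upto_eq_span: "k_upto le \<alpha> l ks = pm.span (k_gens le \<alpha> l ks)"
  unfolding k_upto_def k_gens_def lin_span_eq_span ..

lemma set_p_upto: "set (p_upto le \<alpha> b ps) = {q. \<exists>\<beta>. (\<beta>, q) \<in> set (zip b ps) \<and> le \<beta> \<alpha>}"
  unfolding p_upto_def by force

definition upto_span :: "('v mon \<Rightarrow> 'v mon \<Rightarrow> bool) \<Rightarrow> 'v mon \<Rightarrow> 'v mon list \<Rightarrow> 'v mpoly list
    \<Rightarrow> 'v mon list \<Rightarrow> 'v mpoly list \<Rightarrow> 'v mpoly set" where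
  "upto_span le \<alpha> b ps l ks = pm.span (set (p_upto le \<alpha> b ps) \<union> k_gens le \<alpha> l ks)"

lemma upto_span_mono:
  assumes mo: "monomial_order le" and "le \<alpha>' \<alpha>"
  shows "upto_span le \<alpha>' b ps l ks \<subseteq> upto_span le \<alpha> b ps l ks"
proof -
  have "set (p_upto le \<alpha>' b ps) \<subseteq> set (p_upto le \<alpha> b ps)"
    using assms monomial_order_trans[OF mo] unfolding set_p_upto by blast
  moreover have "k_gens le \<alpha>' l ks \<subseteq> k_gens le \<alpha> l ks"
    using assms monomial_order_trans[OF mo] unfolding k_gens_def by blast
  ultimately show ?thesis
    unfolding upto_span_def by (intro pm.span_mono Un_mono)
qed

context alg_inv
begin

lemma monom_in_upto_span_if_in_b:
  assumes mo: "monomial_order le" and "\<alpha> \<in> set b"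
  shows "monom \<alpha> \<in> upto_span le \<alpha> b ps l ks"
proof -
  obtain q where q: "(\<alpha>, q) \<in> set (zip b ps)"
    using in_set_impl_in_set_zip1[OF length_ps assms(2)] by blast
  have "p_below le \<alpha> b ps \<subseteq> set (p_upto le \<alpha> b ps)"
    unfolding p_below_def set_p_upto by blast
  then have "q - monom \<alpha> \<in> upto_span le \<alpha> b ps l ks"
    using ps_leading[OF q] pm.span_mono[of _ "set (p_upto le \<alpha> b ps) \<union> k_gens le \<alpha> l ks"]
    unfolding upto_span_def by blast
  moreover have "q \<in> upto_span le \<alpha> b ps l ks"
    using q monomial_order_refl[OF mo] unfolding upto_span_def set_p_upto
    by (blast intro: pm.span_base)
  ultimately have "q - (q - monom \<alpha>) \<in> upto_span le \<alpha> b ps l ks"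
    unfolding upto_span_def by (rule pm.span_diff[rotated])
  then show ?thesis
    by simp
qed

lemma monom_in_upto_span_if_dvd:
  assumes mo: "monomial_order le" and k: "(\<gamma>, k) \<in> set (zip l ks)" and \<alpha>: "\<alpha> = \<delta> + \<gamma>"
    and IH: "\<And>\<alpha>'. le \<alpha>' \<alpha> \<Longrightarrow> \<alpha>' \<noteq> \<alpha> \<Longrightarrow> monom \<alpha>' \<in> upto_span le \<alpha> b ps l ks"
  shows "monom \<alpha> \<in> upto_span le \<alpha> b ps l ks"
proof -
  define r where "r = k - monom \<gamma>"
  have r: "keys_strictly_below le \<gamma> r"
    using keys_strictly_below_span[OF mo p_below_keys_below] ks_leading[OF k] unfolding r_def
    by blast
  have "monom \<delta> * r \<in> upto_span le \<alpha> b ps l ks"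
  proof (rule in_subspace_if_monoms_in)
    show "pm.subspace (upto_span le \<alpha> b ps l ks)"
      unfolding upto_span_def by simp
    fix a assume "a \<in> Poly_Mapping.keys (monom \<delta> * r)"
    then obtain c where "c \<in> Poly_Mapping.keys r" "a = \<delta> + c"
      using keys_mult[of "monom \<delta>" r] by (auto simp: monom_def)
    then have "le a \<alpha>" "a \<noteq> \<alpha>"
      using r monomial_order_add_left[OF mo] unfolding keys_strictly_below_def \<alpha> by auto
    then show "monom a \<in> upto_span le \<alpha> b ps l ks"
      by (rule IH)
  qed
  moreover have "monom \<delta> * k \<in> upto_span le \<alpha> b ps l ks"
    using k monomial_order_refl[OF mo] unfolding upto_span_def k_gens_def \<alpha>
    by (blast intro: pm.span_base)
  ultimately have "monom \<delta> * k - monom \<delta> * r \<in> upto_span le \<alpha> b ps l ks"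
    unfolding upto_span_def by (rule pm.span_diff[rotated])
  also have "monom \<delta> * k - monom \<delta> * r = monom \<alpha>"
    unfolding r_def \<alpha> monom_mult[symmetric] by (simp add: algebra_simps)
  finally show ?thesis .
qed

lemma monom_in_upto_span:
  assumes mo: "monomial_order le" and dc: "degree_compatible le"
    and cover: "\<And>\<alpha>. mdeg \<alpha> \<le> d \<Longrightarrow> \<alpha> \<in> set b \<or> (\<exists>\<gamma>\<in>set l. mdvd \<gamma> \<alpha>)"
  shows "mdeg \<alpha> \<le> d \<Longrightarrow> monom \<alpha> \<in> upto_span le \<alpha> b ps l ks"
  using wfp_strict_monomial_order[OF mo dc]
proof (induction \<alpha> rule: wfp_induct_rule)
  case (less \<alpha>)
  from cover[OF less.prems] consider "\<alpha> \<in> set b" | \<gamma> where "\<gamma> \<in> set l" "mdvd \<gamma> \<alpha>"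
    by blast
  then show ?case
  proof cases
    case 1
    then show ?thesis
      by (rule monom_in_upto_span_if_in_b[OF mo])
  next
    case 2
    obtain k where "(\<gamma>, k) \<in> set (zip l ks)"
      using in_set_impl_in_set_zip1[OF length_ks 2(1)] by blast
    moreover have "monom \<alpha>' \<in> upto_span le \<alpha> b ps l ks" if "le \<alpha>' \<alpha>" "\<alpha>' \<noteq> \<alpha>" for \<alpha>'
      using less.IH[of \<alpha>'] that upto_span_mono[OF mo that(1), of b ps l ks]
        degree_compatible_mdeg_le[OF mo dc that(1)] less.prems by auto
    ultimately show ?thesis
      by (rule monom_in_upto_span_if_dvd[OF mo _ mdvd_eq_add[OF 2(2)]])
  qed
qed

lemma deg_le_ps:
  assumes "monomial_order le" "degree_compatible le" "q \<in> set ps"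
  shows "deg_le d q"
proof -
  obtain \<beta> where "(\<beta>, q) \<in> set (zip b ps)"
    using in_set_impl_in_set_zip2[OF length_ps assms(3)] by blast
  then show ?thesis
    using ps_leading deg_le_if_keys_below[OF assms(1,2)] deg_le_mono by blast
qed

lemma k_upto_subset_Ann:
  assumes mo: "monomial_order le" and dc: "degree_compatible le"
    and pos: "positive_functional d s" and "mdeg \<alpha> \<le> d"
  shows "k_upto le \<alpha> l ks \<subseteq> Ann s d"
proof -
  have "k_gens le \<alpha> l ks \<subseteq> Ann_succ s d"
  proof
    fix x assume "x \<in> k_gens le \<alpha> l ks"
    then obtain \<delta> \<gamma> k where x: "x = monom \<delta> * k" and k: "(\<gamma>, k) \<in> set (zip l ks)"
      and le: "le (\<delta> + \<gamma>) \<alpha>"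
      unfolding k_gens_def by blast
    have "deg_le (mdeg \<gamma>) k" "ip s k k = 0" "mdeg \<gamma> \<le> d"
      using ks_leading[OF k] deg_le_if_keys_below[OF mo dc] by auto
    then have "k \<in> Ann_succ s d"
      using in_Ann_succI[OF pos] deg_le_mono unfolding ip_def by blast
    moreover have "mdeg \<delta> + mdeg \<gamma> \<le> d"
      using degree_compatible_mdeg_le[OF mo dc le] assms(4) by (simp add: mdeg_add)
    ultimately show "x \<in> Ann_succ s d"
      unfolding x using monom_mult_in_Ann_succ[OF pos] \<open>deg_le (mdeg \<gamma>) k\<close> by blast
  qed
  then have "k_gens le \<alpha> l ks \<subseteq> Ann s d"
    using Ann_succ_subset_Ann by blast
  then show ?thesis
    unfolding k_upto_eq_span by (rule pm.span_minimal[OF _ Ann_subspace])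
qed

lemma proj_in_k_upto:
  assumes mo: "monomial_order le" and dc: "degree_compatible le"
    and pos: "positive_functional d s" and "mdeg \<alpha> \<le> d"
    and \<alpha>: "monom \<alpha> \<in> upto_span le \<alpha> b ps l ks"
  shows "proj s (monom \<alpha>) (p_upto le \<alpha> b ps) \<in> k_upto le \<alpha> l ks"
proof -
  let ?P = "set (p_upto le \<alpha> b ps)" and ?pr = "proj s (monom \<alpha>) (p_upto le \<alpha> b ps)"
  have P: "?P \<subseteq> set ps"
    unfolding set_p_upto by (auto dest: set_zip_rightD)
  have orth: "pairwise (\<lambda>q q'. ip s q q' = 0) ?P"
    by (rule pairwise_subset[OF orthogonal_ps P])
  have nonnull: "ip s q q \<noteq> 0" if "q \<in> ?P" for q
    using ip_self_ps P that by blast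
  have "distinct (p_upto le \<alpha> b ps)"
    unfolding p_upto_def by (rule distinct_map_filter) (simp add: distinct_ps length_ps)
  then have pr_orth: "ip s ?pr q = 0" if "q \<in> ?P" for q
    using ip_proj_eq_0 orth nonnull that by blast
  have "?pr - monom \<alpha> \<in> upto_span le \<alpha> b ps l ks"
    using proj_diff_in_span pm.span_mono[of ?P "?P \<union> k_gens le \<alpha> l ks"]
    unfolding upto_span_def by blast
  then have "?pr \<in> pm.span (?P \<union> k_gens le \<alpha> l ks)"
    using \<alpha> unfolding upto_span_def by (metis diff_add_cancel pm.span_add)
  moreover have "ip s g q = 0" if "q \<in> ?P" "g \<in> k_gens le \<alpha> l ks" for q g
  proof -
    have "g \<in> Ann s d"
      using that(2) k_upto_subset_Ann[OF mo dc pos assms(4)] pm.span_base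
      unfolding k_upto_eq_span by blast
    then show ?thesis
      using deg_le_ps[OF mo dc] P that(1) unfolding Ann_def ip_def by blast
  qed
  ultimately show ?thesis
    unfolding k_upto_eq_span using in_span_if_orthogonal orth nonnull pr_orth by blast
qed

end

theorem proposition4p1:
  fixes le :: "('v::finite) mon \<Rightarrow> 'v mon \<Rightarrow> bool"
    and s :: "'v mon \<Rightarrow> real" and d :: nat
    and b :: "'v mon list" and ps :: "'v mpoly list"
    and l :: "'v mon list" and ks :: "'v mpoly list" and a :: "'v mon"
  assumes "monomial_order le" and "degree_compatible le"
    and "positive_functional d s"
    and "alg_output le s d (b, ps, l, ks)"
    and "mdeg a \<le> d" and "\<exists>g\<in>set l. mdvd g a"
  shows "proj s (monom a) (p_upto le a b ps) \<in> k_upto le a l ks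
         \<and> k_upto le a l ks \<subseteq> Ann s d"
proof -
  note mo = assms(1) and dc = assms(2) and pos = assms(3) and out = assms(4)
  interpret alg_inv le s d b ps l ks
    by (rule alg_output(1)[OF mo dc out])
  have "monom a \<in> upto_span le a b ps l ks"
    using monom_in_upto_span[OF mo dc alg_output(2)[OF mo dc out] assms(5)] .
  then show ?thesis
    using proj_in_k_upto[OF mo dc pos assms(5)] k_upto_subset_Ann[OF mo dc pos assms(5)] by blast
qed

end
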